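(* Let $F=(f_1,\dots,f_m)^\top$ satisfy the standing assumptions (A1)–(A3). Let $\gamma_0>0$, $x_0,x_1\in\mathbb R^n$, $\gamma(t)=\mu+(\gamma_0-\mu)e^{-t}$, and let $X,Z:[0,\infty)\to\mathbb R^n$ be locally absolutely continuous with $X(0)=x_0$, $Z(0)=x_0+x_1$, satisfying for almost every $t>0$ $$X'(t)=Z(t)-X(t),\qquad \gamma(t)Z'(t)\in\mu\big(X(t)-Z(t)\big)-\operatorname*{argmin}_{v\in C(X(t))}\langle X(t)-Z(t),v\rangle.$$ Let $\alpha:=F(x_0)+\frac{\gamma_0}{2}\|x_1\|^2\mathbf 1\in\mathbb R^m$, where $\mathbf 1=(1,\dots,1)^\top$. Then $S(\alpha)<\infty$ and for all $t>0$, $$u_0(X(t))\le e^{-t}\Big[u_0(x_0)+\gamma_0\|x_0+x_1\|^2+\gamma_0S(\alpha)^2\Big].$$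
   Context: Standing assumptions: (A1) each $f_j:\mathbb R^n\to\mathbb R$ is continuously differentiable, $\nabla f_j$ is $L_j$-Lipschitz, and $f_j$ is $\mu_j$-strongly convex, i.e. $f_j(z)\ge f_j(y)+\langle\nabla f_j(y),z-y\rangle+\frac{\mu_j}{2}\|z-y\|^2$, with $0\le\mu_j\le L_j<\infty$; $\mu:=\min_j\mu_j$, $L:=\max_jL_j$. (A2) There is $j_0$ such that every sublevel set $\{x: f_{j_0}(x)\le c\}$, $c\in\mathbb R$, is bounded. (A3) For every $x\in\mathbb R^n$ there exists $x^*\in\mathcal P_w$ with $F(x^* )\le F(x)$ (componentwise). Notation: $C(x)=\mathrm{conv}\{\nabla f_j(x)\}_{j=1}^m$; $\mathcal P_w$ is the set of weakly Pareto optimal points of $\min_xF(x)$ (no $y$ with $F(y)<F(x^* )$ componentwise); $\mathcal L_F(\alpha)=\{x:F(x)\le\alpha\}$; $f(x;z)=\min_j[f_j(x)-f_j(z)]$; $u_0(x)=\sup_{z\in\mathbb R^n}f(x;z)$; $S(\alpha)=\sup_{F^*\in F(\mathcal P_w\cap\mathcal L_F(\alpha))}\inf_{z\in F^{-1}(F^* )}\|z\|$. *)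

theory Defs
  imports "HOL-Analysis.Analysis"
begin

definition absolutely_continuous_on :: "real set \<Rightarrow> (real \<Rightarrow> 'b::real_normed_vector) \<Rightarrow> bool" where
  "absolutely_continuous_on S f \<longleftrightarrow>
     (\<forall>\<epsilon>>0. \<exists>\<delta>>0. \<forall>(N::nat) (a::nat \<Rightarrow> real) b.
        (\<forall>k<N. a k \<le> b k \<and> {a k..b k} \<subseteq> S) \<and>
        disjoint_family_on (\<lambda>k. {a k<..<b k}) {..<N} \<and>
        (\<Sum>k<N. b k - a k) < \<delta> \<longrightarrow>
        (\<Sum>k<N. norm (f (b k) - f (a k))) < \<epsilon>)"

definition loc_abs_cont_nonneg :: "(real \<Rightarrow> 'b::real_normed_vector) \<Rightarrow> bool" where
  "loc_abs_cont_nonneg f \<longleftrightarrow> (\<forall>T\<ge>0. absolutely_continuous_on {0..T} f)"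

definition weak_pareto :: "('i \<Rightarrow> 'a \<Rightarrow> real) \<Rightarrow> 'a set" where
  "weak_pareto f = {xs. \<not> (\<exists>y. \<forall>j. f j y < f j xs)}"

definition level_set :: "('i \<Rightarrow> 'a \<Rightarrow> real) \<Rightarrow> ('i \<Rightarrow> real) \<Rightarrow> 'a set" where
  "level_set f \<alpha> = {x. \<forall>j. f j x \<le> \<alpha> j}"

definition merit :: "('i::finite \<Rightarrow> 'a \<Rightarrow> real) \<Rightarrow> 'a \<Rightarrow> 'a \<Rightarrow> real" where
  "merit f x z = Min (range (\<lambda>j. f j x - f j z))"

definition u0 :: "('i::finite \<Rightarrow> 'a \<Rightarrow> real) \<Rightarrow> 'a \<Rightarrow> ereal" where
  "u0 f x = (SUP z. ereal (merit f x z))"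

definition S_fun :: "('i \<Rightarrow> 'a::real_normed_vector \<Rightarrow> real) \<Rightarrow> ('i \<Rightarrow> real) \<Rightarrow> ereal" where
  "S_fun f \<alpha> = (SUP Fs \<in> (\<lambda>x j. f j x) ` (weak_pareto f \<inter> level_set f \<alpha>).
                  (INF z \<in> {z. (\<lambda>j. f j z) = Fs}. ereal (norm z)))"

end

theory Submission
  imports Defs
begin

text \<open>Two Lyapunov functions drive the estimate. The energy
  \<open>f\<^sub>j(X) + \<gamma>/2 \<parallel>Z - X\<parallel>\<^sup>2\<close> is nonincreasing for every \<open>j\<close>, which keeps the trajectory in
  the level set \<open>L\<^sub>F(\<alpha>)\<close>. For fixed \<open>z\<close>, also
  \<open>e\<^sup>t min\<^sub>j (f\<^sub>j(X) - f\<^sub>j(z) + \<gamma>/2 \<parallel>Z - z\<parallel>\<^sup>2)\<close> is nonincreasing: at an index attaining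
  the minimum, strong convexity and the argmin condition make its derivative nonpositive.
  Hence \<open>f(X(t); z) \<le> e\<^sup>-\<^sup>t (f(x\<^sub>0; z) + \<gamma>\<^sub>0/2 \<parallel>x\<^sub>0 + x\<^sub>1 - z\<parallel>\<^sup>2)\<close>. To bound the
  last term, \<open>z\<close> is replaced by a weakly Pareto point dominating it (A3), which lies in
  \<open>L\<^sub>F(\<alpha>)\<close> whenever \<open>f(X(t); z) > 0\<close>, and then by a point with the same image whose norm
  exceeds \<open>S(\<alpha>)\<close> arbitrarily little; \<open>S(\<alpha>)\<close> is finite by (A2).

  The trajectories are only absolutely continuous and the dynamics hold almost everywhere,
  so monotonicity comes from a criterion of Lebesgue type: an absolutely continuous function
  whose upper derivative is nonpositive off a null set is nonincreasing. A fine tagged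
  division is split into the tags inside a small open cover of the null set, controlled by
  absolute continuity, and the remaining tags, controlled by the derivative bound.\<close>

lemma Min_range_attained:
  fixes a :: "'i::finite \<Rightarrow> 'b::linorder"
  obtains j where "Min (range a) = a j"
proof -
  have "Min (range a) \<in> range a"
    by (rule Min_in) auto
  then show ?thesis
    using that by blast
qed

lemma Min_range_mono:
  fixes a b :: "'i::finite \<Rightarrow> real"
  assumes "\<And>j. a j \<le> b j"
  shows "Min (range a) \<le> Min (range b)"
proof -
  obtain k where "Min (range b) = b k"
    by (rule Min_range_attained)
  moreover have "Min (range a) \<le> a k"
    by simp
  ultimately show ?thesis
    using assms[of k] by linarith
qed

lemma Min_range_diff_le:
  fixes a b :: "'i::finite \<Rightarrow> real"
  shows "Min (range a) - Min (range b) \<le> (\<Sum>j\<in>UNIV. \<bar>a j - b j\<bar>)"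
proof -
  obtain k where "Min (range b) = b k"
    by (rule Min_range_attained)
  moreover have "Min (range a) \<le> a k"
    by simp
  moreover have "\<bar>a k - b k\<bar> \<le> (\<Sum>j\<in>UNIV. \<bar>a j - b j\<bar>)"
    by (rule member_le_sum) auto
  ultimately show ?thesis
    by linarith
qed

lemma Min_range_affine:
  fixes a :: "'i::finite \<Rightarrow> real"
  assumes "c > 0"
  shows "Min (range (\<lambda>j. c * (a j + d))) = c * (Min (range a) + d)"
proof -
  have "mono (\<lambda>y. c * (y + d))"
    using assms by (auto simp: mono_def)
  then have "c * (Min (range a) + d) = Min ((\<lambda>y. c * (y + d)) ` range a)"
    by (rule mono_Min_commute) auto
  then show ?thesis
    by (simp add: image_image)
qed

section \<open>Absolute continuity\<close>

lemma absolutely_continuous_onE: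
  assumes "absolutely_continuous_on S f" "\<epsilon> > 0"
  obtains \<delta> where "\<delta> > 0"
    "\<And>(N::nat) (a::nat \<Rightarrow> real) b. \<forall>k<N. a k \<le> b k \<and> {a k..b k} \<subseteq> S \<Longrightarrow> disjoint_family_on (\<lambda>k. {a k<..<b k}) {..<N} \<Longrightarrow>
       (\<Sum>k<N. b k - a k) < \<delta> \<Longrightarrow> (\<Sum>k<N. norm (f (b k) - f (a k))) < \<epsilon>"
  using assms unfolding absolutely_continuous_on_def by meson

lemma absolutely_continuous_on_imp_continuous_on:
  fixes f :: "real \<Rightarrow> 'b::real_normed_vector"
  assumes "absolutely_continuous_on {a..b} f"
  shows "continuous_on {a..b} f"
  unfolding continuous_on_iff
proof (intro ballI allI impI)
  fix x e :: real assume x: "x \<in> {a..b}" and e: "0 < e"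
  obtain d where d: "d > 0" and H: "\<And>(N::nat) l r. \<forall>k<N. l k \<le> r k \<and> {l k..r k} \<subseteq> {a..b} \<Longrightarrow>
      disjoint_family_on (\<lambda>k. {l k<..<r k}) {..<N} \<Longrightarrow> (\<Sum>k<N. r k - l k) < d \<Longrightarrow>
      (\<Sum>k<N. norm (f (r k) - f (l k))) < e"
    using absolutely_continuous_onE[OF assms e] by blast
  have "dist (f y) (f x) < e" if y: "y \<in> {a..b}" "dist y x < d" for y
  proof -
    have "norm (f (max x y) - f (min x y)) < e"
      using H[of 1 "\<lambda>_. min x y" "\<lambda>_. max x y"] x y by (auto simp: dist_real_def disjoint_family_on_def)
    then show ?thesis
      by (cases "x \<le> y") (auto simp: dist_norm norm_minus_commute max_def min_def)
  qed
  then show "\<exists>d>0. \<forall>y\<in>{a..b}. dist y x < d \<longrightarrow> dist (f y) (f x) < e"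
    using d by blast
qed

lemma absolutely_continuous_on_bounded:
  fixes f :: "real \<Rightarrow> 'b::real_normed_vector"
  assumes "absolutely_continuous_on {a..b} f"
  obtains B where "B \<ge> 0" "\<And>s. s \<in> {a..b} \<Longrightarrow> norm (f s) \<le> B"
proof -
  have "bounded (f ` {a..b})"
    by (intro compact_imp_bounded compact_continuous_image absolutely_continuous_on_imp_continuous_on assms)
      simp
  then obtain B where "B > 0" "\<forall>y\<in>f ` {a..b}. norm y \<le> B"
    using bounded_pos by metis
  then show ?thesis using that[of B] by auto
qed

lemma absolutely_continuous_on_uniformE:
  assumes "finite I" and F: "\<And>j. j \<in> I \<Longrightarrow> absolutely_continuous_on S (F j)" and "\<epsilon> > 0"
  obtains \<delta> where "\<delta> > 0"
    "\<And>j (N::nat) (a::nat \<Rightarrow> real) b. j \<in> I \<Longrightarrow> \<forall>k<N. a k \<le> b k \<and> {a k..b k} \<subseteq> S \<Longrightarrow>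
       disjoint_family_on (\<lambda>k. {a k<..<b k}) {..<N} \<Longrightarrow> (\<Sum>k<N. b k - a k) < \<delta> \<Longrightarrow>
       (\<Sum>k<N. norm (F j (b k) - F j (a k))) < \<epsilon>"
proof -
  define small where "small j d \<longleftrightarrow> (\<forall>(N::nat) (a::nat \<Rightarrow> real) b. (\<forall>k<N. a k \<le> b k \<and> {a k..b k} \<subseteq> S) \<and>
      disjoint_family_on (\<lambda>k. {a k<..<b k}) {..<N} \<and> (\<Sum>k<N. b k - a k) < d \<longrightarrow>
      (\<Sum>k<N. norm (F j (b k) - F j (a k))) < \<epsilon>)" for j d
  have small_mono: "small j y" if "small j d" "y \<le> d" for j d y
    using that unfolding small_def by (meson less_le_trans)
  have "\<forall>\<^sub>F d in at_right 0. small j d" if j: "j \<in> I" for j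
  proof -
    obtain d where "d > 0" "small j d"
      unfolding small_def using F[OF j, unfolded absolutely_continuous_on_def, rule_format, OF \<open>\<epsilon> > 0\<close>]
      by blast
    then show ?thesis
      unfolding eventually_at_right_field using small_mono by (intro exI[of _ d]) auto
  qed
  then have ev: "\<forall>\<^sub>F d in at_right 0. 0 < d \<and> (\<forall>j\<in>I. small j d)"
    by (intro eventually_conj eventually_ball_finite \<open>finite I\<close> eventually_at_right_less) auto
  then obtain d where d: "d > 0" "\<And>j. j \<in> I \<Longrightarrow> small j d"
    using eventually_happens'[OF _ ev] by auto
  show ?thesis
  proof (rule that[OF d(1)])
    fix j and N :: nat and a b :: "nat \<Rightarrow> real"
    assume "j \<in> I" "\<forall>k<N. a k \<le> b k \<and> {a k..b k} \<subseteq> S" "disjoint_family_on (\<lambda>k. {a k<..<b k}) {..<N}"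
      "(\<Sum>k<N. b k - a k) < d"
    then show "(\<Sum>k<N. norm (F j (b k) - F j (a k))) < \<epsilon>"
      using d(2)[of j] unfolding small_def by blast
  qed
qed

lemma absolutely_continuous_on_dominated:
  fixes F :: "'i \<Rightarrow> real \<Rightarrow> 'b::real_normed_vector" and H :: "real \<Rightarrow> 'c::real_normed_vector"
  assumes "finite I" and F: "\<And>j. j \<in> I \<Longrightarrow> absolutely_continuous_on S (F j)" and "K \<ge> 0"
    and dom: "\<And>s t. s \<in> S \<Longrightarrow> t \<in> S \<Longrightarrow> norm (H t - H s) \<le> K * (\<Sum>j\<in>I. norm (F j t - F j s))"
  shows "absolutely_continuous_on S H"
  unfolding absolutely_continuous_on_def
proof (intro allI impI)
  fix e :: real assume "e > 0"
  define e' where "e' = e / (K * card I + 1)"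
  have "0 < K * card I + 1"
    using \<open>K \<ge> 0\<close> by (simp add: add_nonneg_pos)
  then have "e' > 0" and Ke': "K * card I * e' < e"
    using \<open>e > 0\<close> by (simp_all add: e'_def field_simps)
  obtain d where "d > 0" and each: "\<And>j (N::nat) (a::nat \<Rightarrow> real) b. j \<in> I \<Longrightarrow>
      \<forall>k<N. a k \<le> b k \<and> {a k..b k} \<subseteq> S \<Longrightarrow> disjoint_family_on (\<lambda>k. {a k<..<b k}) {..<N} \<Longrightarrow>
      (\<Sum>k<N. b k - a k) < d \<Longrightarrow> (\<Sum>k<N. norm (F j (b k) - F j (a k))) < e'"
    using absolutely_continuous_on_uniformE[where F=F, OF \<open>finite I\<close> F \<open>e' > 0\<close>] by blast
  have main: "(\<Sum>k<N. norm (H (b k) - H (a k))) < e"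
    if ab: "(\<forall>k<N. a k \<le> b k \<and> {a k..b k} \<subseteq> S) \<and> disjoint_family_on (\<lambda>k. {a k<..<b k}) {..<N}
      \<and> (\<Sum>k<N. b k - a k) < d" for N :: nat and a b :: "nat \<Rightarrow> real"
  proof -
    have "(\<Sum>k<N. norm (H (b k) - H (a k))) \<le> (\<Sum>k<N. K * (\<Sum>j\<in>I. norm (F j (b k) - F j (a k))))"
      using ab by (intro sum_mono dom) force+
    also have "\<dots> = K * (\<Sum>j\<in>I. \<Sum>k<N. norm (F j (b k) - F j (a k)))"
      by (simp add: sum_distrib_left sum.swap[of _ I])
    also have "\<dots> \<le> K * (\<Sum>j\<in>I. e')"
      using each ab \<open>K \<ge> 0\<close> by (intro mult_left_mono sum_mono) (auto intro: less_imp_le)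
    also have "\<dots> < e"
      using Ke' by simp
    finally show ?thesis .
  qed
  show "\<exists>\<delta>>0. \<forall>(N::nat) (a::nat \<Rightarrow> real) b. (\<forall>k<N. a k \<le> b k \<and> {a k..b k} \<subseteq> S) \<and>
      disjoint_family_on (\<lambda>k. {a k<..<b k}) {..<N} \<and> (\<Sum>k<N. b k - a k) < \<delta> \<longrightarrow>
      (\<Sum>k<N. norm (H (b k) - H (a k))) < e"
    by (intro exI[of _ d] conjI allI impI \<open>d > 0\<close>) (erule main)
qed

lemma absolutely_continuous_on_dominated2:
  fixes u v :: "real \<Rightarrow> 'b::real_normed_vector" and H :: "real \<Rightarrow> 'c::real_normed_vector"
  assumes "absolutely_continuous_on S u" "absolutely_continuous_on S v" "K \<ge> 0"
    and "\<And>s t. s \<in> S \<Longrightarrow> t \<in> S \<Longrightarrow> norm (H t - H s) \<le> K * (norm (u t - u s) + norm (v t - v s))"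
  shows "absolutely_continuous_on S H"
  by (rule absolutely_continuous_on_dominated[where I=UNIV and F="\<lambda>b. if b then u else v"])
    (use assms in \<open>auto simp: UNIV_bool add.commute\<close>)

lemma absolutely_continuous_on_ident: "absolutely_continuous_on S (\<lambda>t. t)"
  unfolding absolutely_continuous_on_def
proof (intro allI impI)
  fix e :: real assume "e > 0"
  moreover have "(\<Sum>k<N. norm (b k - a k)) = (\<Sum>k<N. b k - a k)"
    if "\<forall>k<N. a k \<le> b k" for N :: nat and a b :: "nat \<Rightarrow> real"
    using that by (intro sum.cong) auto
  ultimately show "\<exists>\<delta>>0. \<forall>(N::nat) (a::nat \<Rightarrow> real) b. (\<forall>k<N. a k \<le> b k \<and> {a k..b k} \<subseteq> S) \<and>
      disjoint_family_on (\<lambda>k. {a k<..<b k}) {..<N} \<and> (\<Sum>k<N. b k - a k) < \<delta> \<longrightarrow>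
      (\<Sum>k<N. norm (b k - a k)) < e"
    by (intro exI[of _ e]) simp
qed

lemma absolutely_continuous_on_const: "absolutely_continuous_on S (\<lambda>t. c)"
  by (rule absolutely_continuous_on_dominated[where I="{}" and K=0]) auto

lemma absolutely_continuous_on_compose_lipschitz:
  fixes x :: "real \<Rightarrow> 'b::real_normed_vector" and h :: "'b \<Rightarrow> 'c::real_normed_vector"
  assumes "absolutely_continuous_on S x" "\<And>s. s \<in> S \<Longrightarrow> x s \<in> D" "K \<ge> 0"
    and "\<And>y z. y \<in> D \<Longrightarrow> z \<in> D \<Longrightarrow> norm (h y - h z) \<le> K * norm (y - z)"
  shows "absolutely_continuous_on S (\<lambda>t. h (x t))"
  by (rule absolutely_continuous_on_dominated[where I="{()}" and F="\<lambda>_. x" and K=K]) (use assms in auto)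

lemma absolutely_continuous_on_add:
  fixes u v :: "real \<Rightarrow> 'b::real_normed_vector"
  assumes "absolutely_continuous_on S u" "absolutely_continuous_on S v"
  shows "absolutely_continuous_on S (\<lambda>t. u t + v t)"
  by (rule absolutely_continuous_on_dominated2[OF assms, where K=1])
    (simp_all add: add_diff_add norm_triangle_ineq)

lemma absolutely_continuous_on_diff:
  fixes u v :: "real \<Rightarrow> 'b::real_normed_vector"
  assumes "absolutely_continuous_on S u" "absolutely_continuous_on S v"
  shows "absolutely_continuous_on S (\<lambda>t. u t - v t)"
proof (rule absolutely_continuous_on_dominated2[OF assms, where K=1])
  fix s t
  show "norm (u t - v t - (u s - v s)) \<le> 1 * (norm (u t - u s) + norm (v t - v s))"
    using norm_triangle_ineq4[of "u t - u s" "v t - v s"] by (simp add: algebra_simps)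
qed simp

lemma absolutely_continuous_on_mult:
  fixes u v :: "real \<Rightarrow> real"
  assumes u: "absolutely_continuous_on {a..b} u" and v: "absolutely_continuous_on {a..b} v"
  shows "absolutely_continuous_on {a..b} (\<lambda>t. u t * v t)"
proof -
  obtain Bu where Bu: "Bu \<ge> 0" "\<And>s. s \<in> {a..b} \<Longrightarrow> \<bar>u s\<bar> \<le> Bu"
    using absolutely_continuous_on_bounded[OF u] by auto
  obtain Bv where Bv: "Bv \<ge> 0" "\<And>s. s \<in> {a..b} \<Longrightarrow> \<bar>v s\<bar> \<le> Bv"
    using absolutely_continuous_on_bounded[OF v] by auto
  show ?thesis
  proof (rule absolutely_continuous_on_dominated2[OF u v, where K="Bu + Bv"])
    fix s t assume st: "s \<in> {a..b}" "t \<in> {a..b}"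
    have "\<bar>u t * v t - u s * v s\<bar> = \<bar>u t * (v t - v s) + v s * (u t - u s)\<bar>"
      by (simp add: algebra_simps)
    also have "\<dots> \<le> \<bar>u t\<bar> * \<bar>v t - v s\<bar> + \<bar>v s\<bar> * \<bar>u t - u s\<bar>"
      by (simp add: abs_mult abs_triangle_ineq[THEN order_trans])
    also have "\<dots> \<le> Bu * \<bar>v t - v s\<bar> + Bv * \<bar>u t - u s\<bar>"
      using Bu(2)[OF st(2)] Bv(2)[OF st(1)] by (intro add_mono mult_right_mono) auto
    also have "\<dots> \<le> (Bu + Bv) * (\<bar>u t - u s\<bar> + \<bar>v t - v s\<bar>)"
      using Bu Bv by (simp add: algebra_simps)
    finally show "norm (u t * v t - u s * v s) \<le> (Bu + Bv) * (norm (u t - u s) + norm (v t - v s))"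
      by simp
  qed (use Bu Bv in simp)
qed

lemma absolutely_continuous_on_power2_norm:
  fixes x :: "real \<Rightarrow> 'b::real_normed_vector"
  assumes "absolutely_continuous_on {a..b} x"
  shows "absolutely_continuous_on {a..b} (\<lambda>t. (norm (x t))\<^sup>2)"
proof -
  obtain B where B: "B \<ge> 0" "\<And>s. s \<in> {a..b} \<Longrightarrow> norm (x s) \<le> B"
    using absolutely_continuous_on_bounded[OF assms] by blast
  show ?thesis
  proof (rule absolutely_continuous_on_compose_lipschitz[OF assms, where D="cball 0 B" and K="2 * B"])
    fix y z :: 'b assume yz: "y \<in> cball 0 B" "z \<in> cball 0 B"
    have "(norm y)\<^sup>2 - (norm z)\<^sup>2 = (norm y - norm z) * (norm y + norm z)"
      by (simp add: power2_eq_square algebra_simps)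
    then have "\<bar>(norm y)\<^sup>2 - (norm z)\<^sup>2\<bar> = \<bar>norm y - norm z\<bar> * (norm y + norm z)"
      by (simp add: abs_mult)
    also have "\<dots> \<le> norm (y - z) * (2 * B)"
      using yz by (intro mult_mono norm_triangle_ineq3) auto
    finally show "norm ((norm y)\<^sup>2 - (norm z)\<^sup>2) \<le> 2 * B * norm (y - z)"
      by (simp add: mult.commute)
  qed (use B in auto)
qed

lemma absolutely_continuous_on_Min:
  fixes F :: "'i::finite \<Rightarrow> real \<Rightarrow> real"
  assumes "\<And>j. absolutely_continuous_on S (F j)"
  shows "absolutely_continuous_on S (\<lambda>t. Min (range (\<lambda>j. F j t)))"
proof (rule absolutely_continuous_on_dominated[where I=UNIV and F=F and K=1])
  fix s t
  show "norm (Min (range (\<lambda>j. F j t)) - Min (range (\<lambda>j. F j s))) \<le> 1 * (\<Sum>j\<in>UNIV. norm (F j t - F j s))"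
    using Min_range_diff_le[of "\<lambda>j. F j t" "\<lambda>j. F j s"] Min_range_diff_le[of "\<lambda>j. F j s" "\<lambda>j. F j t"]
    by (simp add: abs_minus_commute)
qed (use assms in auto)

lemma absolutely_continuous_on_derivative_bounded:
  fixes \<phi> :: "real \<Rightarrow> real"
  assumes "\<And>s. s \<in> {a..b} \<Longrightarrow> (\<phi> has_real_derivative \<phi>' s) (at s)"
    and "\<And>s. s \<in> {a..b} \<Longrightarrow> \<bar>\<phi>' s\<bar> \<le> K"
  shows "absolutely_continuous_on {a..b} \<phi>"
proof (rule absolutely_continuous_on_compose_lipschitz[OF absolutely_continuous_on_ident, where D="{a..b}" and K="max K 0"])
  fix y z assume "y \<in> {a..b}" "z \<in> {a..b}"
  then have "norm (\<phi> y - \<phi> z) \<le> K * norm (y - z)"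
    using assms by (intro field_differentiable_bound[of "{a..b}"]) (auto intro: has_field_derivative_at_within)
  also have "\<dots> \<le> max K 0 * norm (y - z)"
    by (intro mult_right_mono) auto
  finally show "norm (\<phi> y - \<phi> z) \<le> max K 0 * norm (y - z)" .
qed auto

lemma absolutely_continuous_on_exp: "absolutely_continuous_on {a..b} (\<lambda>s::real. exp s)"
  by (rule absolutely_continuous_on_derivative_bounded[where K="exp b"]) (auto intro: DERIV_exp)

section \<open>A monotonicity criterion\<close>

text \<open>Only intervals straddling \<open>t\<close> are constrained: these are what the tags of a fine
  tagged division provide.\<close>

definition upper_deriv_nonpos_at :: "(real \<Rightarrow> real) \<Rightarrow> real \<Rightarrow> bool" where
  "upper_deriv_nonpos_at \<phi> t \<longleftrightarrow> (\<forall>\<epsilon>>0. \<exists>d>0. \<forall>u w.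
     t - d < u \<longrightarrow> u \<le> t \<longrightarrow> t \<le> w \<longrightarrow> w < t + d \<longrightarrow> \<phi> w - \<phi> u \<le> \<epsilon> * (w - u))"

lemma upper_deriv_nonpos_atI:
  fixes \<phi> :: "real \<Rightarrow> real"
  assumes "\<And>\<epsilon>. \<epsilon> > 0 \<Longrightarrow> \<forall>\<^sub>F s in at t.
     (t \<le> s \<longrightarrow> \<phi> s - \<phi> t \<le> \<epsilon> * (s - t)) \<and> (s \<le> t \<longrightarrow> \<phi> t - \<phi> s \<le> \<epsilon> * (t - s))"
  shows "upper_deriv_nonpos_at \<phi> t"
  unfolding upper_deriv_nonpos_at_def
proof (intro allI impI)
  fix \<epsilon> :: real assume "\<epsilon> > 0"
  then obtain d where d: "d > 0" and near: "\<And>s. s \<noteq> t \<Longrightarrow> dist s t < d \<Longrightarrow>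
      (t \<le> s \<longrightarrow> \<phi> s - \<phi> t \<le> \<epsilon> * (s - t)) \<and> (s \<le> t \<longrightarrow> \<phi> t - \<phi> s \<le> \<epsilon> * (t - s))"
    using assms unfolding eventually_at by (metis UNIV_I)
  have "\<phi> w - \<phi> u \<le> \<epsilon> * (w - u)" if uw: "t - d < u" "u \<le> t" "t \<le> w" "w < t + d" for u w
  proof -
    have "\<phi> w - \<phi> t \<le> \<epsilon> * (w - t)"
      using near[of w] uw by (cases "w = t") (auto simp: dist_real_def)
    moreover have "\<phi> t - \<phi> u \<le> \<epsilon> * (t - u)"
      using near[of u] uw by (cases "u = t") (auto simp: dist_real_def)
    ultimately show ?thesis
      by (simp add: algebra_simps)
  qed
  with d show "\<exists>d>0. \<forall>u w. t - d < u \<longrightarrow> u \<le> t \<longrightarrow> t \<le> w \<longrightarrow> w < t + d \<longrightarrow> \<phi> w - \<phi> u \<le> \<epsilon> * (w - u)"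
    by blast
qed

lemma has_real_derivative_eventually_linear_approx:
  fixes \<phi> :: "real \<Rightarrow> real"
  assumes "(\<phi> has_real_derivative D) (at t)" "\<epsilon> > 0"
  shows "\<forall>\<^sub>F s in at t. \<bar>\<phi> s - \<phi> t - D * (s - t)\<bar> \<le> \<epsilon> * \<bar>s - t\<bar>"
proof -
  have "((\<lambda>s. (\<phi> s - \<phi> t) / (s - t)) \<longlongrightarrow> D) (at t)"
    using assms(1) by (simp add: has_field_derivative_iff)
  then have "\<forall>\<^sub>F s in at t. dist ((\<phi> s - \<phi> t) / (s - t)) D < \<epsilon>"
    using assms(2) tendstoD by blast
  moreover have "\<forall>\<^sub>F s in at t. s \<noteq> t"
    by (simp add: eventually_at_filter)
  ultimately show ?thesis
  proof eventually_elim
    case (elim s)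
    have "\<phi> s - \<phi> t - D * (s - t) = ((\<phi> s - \<phi> t) / (s - t) - D) * (s - t)"
      using elim(2) by (simp add: field_simps)
    also have "\<bar>\<dots>\<bar> \<le> \<epsilon> * \<bar>s - t\<bar>"
      using elim(1) by (simp add: abs_mult dist_real_def mult_right_mono)
    finally show ?case .
  qed
qed

text \<open>Indices not attaining the minimum at \<open>t\<close> stay strictly above it nearby, so only the
  active ones matter.\<close>
lemma upper_deriv_nonpos_at_Min:
  fixes \<phi> :: "'i::finite \<Rightarrow> real \<Rightarrow> real"
  assumes deriv: "\<And>j. (\<phi> j has_real_derivative D j) (at t)"
    and active: "\<And>j. \<phi> j t = Min (range (\<lambda>k. \<phi> k t)) \<Longrightarrow> D j \<le> 0"
  shows "upper_deriv_nonpos_at (\<lambda>s. Min (range (\<lambda>j. \<phi> j s))) t"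
proof (rule upper_deriv_nonpos_atI)
  fix \<epsilon> :: real assume \<epsilon>: "\<epsilon> > 0"
  define m where "m s = Min (range (\<lambda>j. \<phi> j s))" for s
  have m_le: "m s \<le> \<phi> j s" for s j
    unfolding m_def by simp
  have m_attained: "\<exists>j. m s = \<phi> j s" for s
    unfolding m_def by (metis Min_range_attained)
  have approx: "\<forall>\<^sub>F s in at t. \<forall>j. \<bar>\<phi> j s - \<phi> j t - D j * (s - t)\<bar> \<le> \<epsilon> * \<bar>s - t\<bar>"
    by (intro eventually_all_finite has_real_derivative_eventually_linear_approx deriv \<epsilon>)
  have inactive: "\<forall>\<^sub>F s in at t. \<forall>j. m t < \<phi> j t \<longrightarrow> m t < \<phi> j s"
  proof (intro eventually_all_finite)
    fix j
    have "(\<phi> j \<longlongrightarrow> \<phi> j t) (at t)"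
      using DERIV_isCont[OF deriv] by (simp add: isCont_def)
    then show "\<forall>\<^sub>F s in at t. m t < \<phi> j t \<longrightarrow> m t < \<phi> j s"
      by (cases "m t < \<phi> j t") (auto dest: order_tendstoD(1))
  qed
  show "\<forall>\<^sub>F s in at t. (t \<le> s \<longrightarrow> m s - m t \<le> \<epsilon> * (s - t)) \<and> (s \<le> t \<longrightarrow> m t - m s \<le> \<epsilon> * (t - s))"
    using approx inactive
  proof eventually_elim
    case (elim s)
    have "m s - m t \<le> \<epsilon> * (s - t)" if "t \<le> s"
    proof -
      obtain k where k: "m t = \<phi> k t"
        using m_attained by blast
      have "D k * (s - t) \<le> 0"
        using active[of k] k that unfolding m_def by (simp add: mult_nonpos_nonneg)
      then show ?thesis
        using m_le[of s k] k elim(1) that by (smt (verit))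
    qed
    moreover have "m t - m s \<le> \<epsilon> * (t - s)" if "s \<le> t"
    proof -
      obtain j where j: "m s = \<phi> j s"
        using m_attained by blast
      show ?thesis
      proof (cases "m t < \<phi> j t")
        case True
        then show ?thesis
          using elim(2) j \<epsilon> that by (smt (verit) mult_nonneg_nonneg)
      next
        case False
        then have "\<phi> j t = m t"
          using m_le[of t j] by simp
        then have "D j * (s - t) \<ge> 0"
          using active[of j] that unfolding m_def by (simp add: mult_nonpos_nonpos)
        then show ?thesis
          using \<open>\<phi> j t = m t\<close> j elim(1) that by (smt (verit))
      qed
    qed
    ultimately show ?case by blast
  qed
qed

lemma upper_deriv_nonpos_at_deriv:
  fixes \<phi> :: "real \<Rightarrow> real"
  assumes "(\<phi> has_real_derivative D) (at t)" "D \<le> 0"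
  shows "upper_deriv_nonpos_at \<phi> t"
  using upper_deriv_nonpos_at_Min[where \<phi>="\<lambda>_::unit. \<phi>" and D="\<lambda>_. D" and t=t] assms by simp

lemma tagged_subdivision_enumerate:
  assumes p: "p tagged_division_of {a..b}" and "q \<subseteq> p"
  obtains n and l r :: "nat \<Rightarrow> real" where "\<forall>k<n. l k \<le> r k \<and> {l k..r k} \<subseteq> {a..b}"
    "disjoint_family_on (\<lambda>k. {l k<..<r k}) {..<n}"
    "\<And>G :: real set \<Rightarrow> real. (\<Sum>(x,K)\<in>q. G K) = (\<Sum>k<n. G {l k..r k})"
proof -
  have "finite q"
    using p \<open>q \<subseteq> p\<close> finite_subset by blast
  then obtain h where h: "bij_betw h {..<card q} q"
    using ex_bij_betw_nat_finite[of q] by (auto simp: lessThan_atLeast0)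
  define l where "l k = Inf (snd (h k))" for k
  define r where "r k = Sup (snd (h k))" for k
  have hp: "h k \<in> p" if "k < card q" for k
    using h that \<open>q \<subseteq> p\<close> by (auto simp: bij_betw_def)
  have lr: "snd (h k) = {l k..r k} \<and> l k \<le> r k \<and> {l k..r k} \<subseteq> {a..b}" if k: "k < card q" for k
  proof -
    obtain u w where "snd (h k) = cbox u w" "snd (h k) \<noteq> {}" "snd (h k) \<subseteq> {a..b}"
      using tagged_division_ofD(3,4,2)[OF p, of "fst (h k)" "snd (h k)"] hp[OF k] by auto
    then show ?thesis
      by (auto simp: l_def r_def)
  qed
  have "\<forall>k<card q. l k \<le> r k \<and> {l k..r k} \<subseteq> {a..b}"
    using lr by blast
  moreover have "disjoint_family_on (\<lambda>k. {l k<..<r k}) {..<card q}"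
    unfolding disjoint_family_on_def
  proof (intro ballI impI)
    fix k k' assume kk': "k \<in> {..<card q}" "k' \<in> {..<card q}" "k \<noteq> k'"
    then have "h k \<noteq> h k'"
      using h by (auto simp: bij_betw_def inj_on_def)
    then have "interior (snd (h k)) \<inter> interior (snd (h k')) = {}"
      using tagged_division_ofD(5)[OF p, of "fst (h k)" "snd (h k)" "fst (h k')" "snd (h k')"] hp kk'
      by (simp add: prod_eq_iff)
    then show "{l k<..<r k} \<inter> {l k'<..<r k'} = {}"
      using lr kk' by auto
  qed
  moreover have "(\<Sum>(x,K)\<in>q. G K) = (\<Sum>k<card q. G {l k..r k})" for G :: "real set \<Rightarrow> real"
    using sum.reindex_bij_betw[OF h, of "\<lambda>(x,K). G K"] lr by (simp add: case_prod_unfold)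
  ultimately show ?thesis
    by (rule that)
qed

lemma absolutely_continuous_on_sum_tagged_subdivision:
  fixes \<phi> :: "real \<Rightarrow> real"
  assumes "absolutely_continuous_on {a..b} \<phi>" "\<eta> > 0"
  obtains \<delta> where "\<delta> > 0" "\<And>p q. p tagged_division_of {a..b} \<Longrightarrow> q \<subseteq> p \<Longrightarrow>
     (\<Sum>(x,K)\<in>q. measure lborel K) < \<delta> \<Longrightarrow> (\<Sum>(x,K)\<in>q. \<phi> (Sup K) - \<phi> (Inf K)) < \<eta>"
proof -
  obtain \<delta> where \<delta>: "\<delta> > 0" and ac: "\<And>(N::nat) l r. \<forall>k<N. l k \<le> r k \<and> {l k..r k} \<subseteq> {a..b} \<Longrightarrow>
      disjoint_family_on (\<lambda>k. {l k<..<r k}) {..<N} \<Longrightarrow> (\<Sum>k<N. r k - l k) < \<delta> \<Longrightarrow>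
      (\<Sum>k<N. norm (\<phi> (r k) - \<phi> (l k))) < \<eta>"
    using absolutely_continuous_onE[OF assms] by blast
  have "(\<Sum>(x,K)\<in>q. \<phi> (Sup K) - \<phi> (Inf K)) < \<eta>"
    if pq: "p tagged_division_of {a..b}" "q \<subseteq> p" and small: "(\<Sum>(x,K)\<in>q. measure lborel K) < \<delta>" for p q
  proof -
    obtain n and l r :: "nat \<Rightarrow> real" where lr: "\<forall>k<n. l k \<le> r k \<and> {l k..r k} \<subseteq> {a..b}"
      and disj: "disjoint_family_on (\<lambda>k. {l k<..<r k}) {..<n}"
      and sums: "\<And>G :: real set \<Rightarrow> real. (\<Sum>(x,K)\<in>q. G K) = (\<Sum>k<n. G {l k..r k})"
      using tagged_subdivision_enumerate[OF pq] by blast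
    have "(\<Sum>k<n. r k - l k) = (\<Sum>(x,K)\<in>q. measure lborel K)"
      using lr by (simp add: sums[of "measure lborel"])
    then have "(\<Sum>k<n. norm (\<phi> (r k) - \<phi> (l k))) < \<eta>"
      using ac[OF lr disj] small by simp
    moreover have "(\<Sum>(x,K)\<in>q. \<phi> (Sup K) - \<phi> (Inf K)) = (\<Sum>k<n. \<phi> (r k) - \<phi> (l k))"
      using sums[of "\<lambda>K. \<phi> (Sup K) - \<phi> (Inf K)"] lr by simp
    moreover have "(\<Sum>k<n. \<phi> (r k) - \<phi> (l k)) \<le> (\<Sum>k<n. norm (\<phi> (r k) - \<phi> (l k)))"
      by (intro sum_mono) auto
    ultimately show ?thesis
      by linarith
  qed
  with \<delta> show ?thesis
    using that by blast
qed

lemma sum_content_tagged_subdivision_le_measure: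
  assumes p: "p tagged_division_of S" and "q \<subseteq> p"
    and U: "U \<in> lmeasurable" "\<And>x K. (x, K) \<in> q \<Longrightarrow> K \<subseteq> U"
  shows "(\<Sum>(x,K)\<in>q. measure lborel K) \<le> measure lebesgue U"
proof -
  have q: "q tagged_division_of (\<Union>(snd ` q))"
    using tagged_partial_division_subset[OF conjunct1[OF p[unfolded tagged_division_of_def]] \<open>q \<subseteq> p\<close>]
    by (rule tagged_partial_division_of_Union_self)
  have "(\<Sum>(x,K)\<in>q. measure lborel K) = (\<Sum>K\<in>snd ` q. measure lborel K)"
    by (rule sum.over_tagged_division_lemma[OF q]) (simp add: content_eq_0_interior)
  also have "\<dots> = (\<Sum>K\<in>snd ` q. measure lebesgue K)"
  proof (rule sum.cong)
    fix K assume "K \<in> snd ` q"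
    then obtain u v where "K = cbox u v"
      using division_ofD(4)[OF division_of_tagged_division[OF q]] by blast
    then show "measure lborel K = measure lebesgue K"
      by simp
  qed simp
  also have "\<dots> = measure lebesgue (\<Union>(snd ` q))"
    by (rule content_division[OF division_of_tagged_division[OF q]])
  also have "\<dots> \<le> measure lebesgue U"
  proof (rule measure_mono_fmeasurable)
    show "\<Union>(snd ` q) \<in> sets lebesgue"
      using lmeasurable_division[OF division_of_tagged_division[OF q]] by (rule fmeasurableD)
  qed (use U in fastforce)+
  finally show ?thesis .
qed

lemma negligible_open_cover:
  assumes "negligible N" "\<delta> > 0"
  obtains U where "open U" "N \<subseteq> U" "U \<in> lmeasurable" "measure lebesgue U < \<delta>"
proof -
  have N: "N \<in> lmeasurable" "measure lebesgue N = 0"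
    using assms(1) negligible_imp_measurable negligible_imp_measure0 by blast+
  obtain U where U: "open U" "N \<subseteq> U" "U - N \<in> lmeasurable" "emeasure lebesgue (U - N) < ennreal \<delta>"
    using sets_lebesgue_outer_open[OF fmeasurableD[OF N(1)] assms(2)] by blast
  have "U = (U - N) \<union> N"
    using U(2) by blast
  then have "U \<in> lmeasurable" "measure lebesgue U \<le> measure lebesgue (U - N) + measure lebesgue N"
    using U(3) N(1) by (metis fmeasurable.Un, metis fmeasurableD measure_Un_le)
  moreover have "measure lebesgue (U - N) < \<delta>"
    using U(3,4) assms(2) by (simp add: emeasure_eq_measure2 ennreal_less_iff)
  ultimately show ?thesis
    using that U(1,2) N(2) by auto
qed

lemma sum_tagged_division_le_of_straddle:
  fixes \<phi> :: "real \<Rightarrow> real"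
  assumes p: "p tagged_division_of {a..b}" and fine: "(\<lambda>t. ball t (r t)) fine p"
    and "a \<le> b" "q \<subseteq> p" "\<epsilon> \<ge> 0"
    and straddle: "\<And>x K u w. (x, K) \<in> q \<Longrightarrow> x - r x < u \<Longrightarrow> u \<le> x \<Longrightarrow> x \<le> w \<Longrightarrow> w < x + r x \<Longrightarrow>
      \<phi> w - \<phi> u \<le> \<epsilon> * (w - u)"
  shows "(\<Sum>(x,K)\<in>q. \<phi> (Sup K) - \<phi> (Inf K)) \<le> \<epsilon> * (b - a)"
proof -
  have "finite p"
    using p by blast
  have "(\<Sum>(x,K)\<in>q. \<phi> (Sup K) - \<phi> (Inf K)) \<le> (\<Sum>(x,K)\<in>q. \<epsilon> * measure lborel K)"
  proof (intro sum_mono, clarify)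
    fix x K assume xK: "(x, K) \<in> q"
    then have "(x, K) \<in> p"
      using \<open>q \<subseteq> p\<close> by blast
    then obtain u w where K: "K = {u..w}"
      using tagged_division_ofD(4)[OF p] by (metis box_real(2))
    have "x \<in> K" "K \<subseteq> ball x (r x)"
      using tagged_division_ofD(2)[OF p \<open>(x, K) \<in> p\<close>] fine \<open>(x, K) \<in> p\<close> by (auto simp: fine_def)
    moreover have "u \<in> K" "w \<in> K" "u \<le> x" "x \<le> w"
      using K \<open>x \<in> K\<close> by auto
    ultimately have "u \<le> x" "x \<le> w" "x - r x < u" "w < x + r x"
      by (auto simp: subset_iff dist_real_def)
    then show "\<phi> (Sup K) - \<phi> (Inf K) \<le> \<epsilon> * measure lborel K"
      using straddle[OF xK] K by simp
  qed
  also have "\<dots> \<le> (\<Sum>(x,K)\<in>p. \<epsilon> * measure lborel K)"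
    using \<open>finite p\<close> \<open>q \<subseteq> p\<close> \<open>\<epsilon> \<ge> 0\<close> by (intro sum_mono2) auto
  also have "\<dots> = \<epsilon> * (b - a)"
    using additive_content_tagged_division[of p a b] p \<open>a \<le> b\<close>
    by (simp add: case_prod_unfold flip: sum_distrib_left)
  finally show ?thesis .
qed

lemma straddle_gauge_exists:
  fixes \<phi> :: "real \<Rightarrow> real"
  assumes "open U" "a \<in> U" "b \<in> U" "\<epsilon> > 0"
    and deriv: "\<And>t. a < t \<Longrightarrow> t < b \<Longrightarrow> t \<notin> U \<Longrightarrow> upper_deriv_nonpos_at \<phi> t"
  obtains r where "\<And>t. r t > 0" "\<And>t. t \<in> U \<Longrightarrow> ball t (r t) \<subseteq> U"
    "\<And>t u w. a \<le> t \<Longrightarrow> t \<le> b \<Longrightarrow> t \<notin> U \<Longrightarrow> t - r t < u \<Longrightarrow> u \<le> t \<Longrightarrow> t \<le> w \<Longrightarrow> w < t + r t \<Longrightarrow>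
       \<phi> w - \<phi> u \<le> \<epsilon> * (w - u)"
proof -
  have "\<exists>\<rho>>0. (t \<in> U \<longrightarrow> ball t \<rho> \<subseteq> U) \<and> (a \<le> t \<and> t \<le> b \<and> t \<notin> U \<longrightarrow>
      (\<forall>u w. t - \<rho> < u \<longrightarrow> u \<le> t \<longrightarrow> t \<le> w \<longrightarrow> w < t + \<rho> \<longrightarrow> \<phi> w - \<phi> u \<le> \<epsilon> * (w - u)))" for t
  proof (cases "t \<in> U")
    case True
    then obtain \<rho> where "\<rho> > 0" "ball t \<rho> \<subseteq> U"
      using \<open>open U\<close> open_contains_ball by blast
    then show ?thesis
      using True by (intro exI[of _ \<rho>]) simp
  next
    case False
    show ?thesis
    proof (cases "a \<le> t \<and> t \<le> b")
      case True
      then have "upper_deriv_nonpos_at \<phi> t"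
        using False \<open>a \<in> U\<close> \<open>b \<in> U\<close> deriv by force
      then obtain d where "d > 0" "\<forall>u w. t - d < u \<longrightarrow> u \<le> t \<longrightarrow> t \<le> w \<longrightarrow> w < t + d \<longrightarrow>
          \<phi> w - \<phi> u \<le> \<epsilon> * (w - u)"
        using \<open>\<epsilon> > 0\<close> unfolding upper_deriv_nonpos_at_def by blast
      then show ?thesis
        using False by (intro exI[of _ d]) simp
    qed (use False in \<open>intro exI[of _ 1], auto\<close>)
  qed
  then have "\<forall>t. \<exists>\<rho>>0. (t \<in> U \<longrightarrow> ball t \<rho> \<subseteq> U) \<and> (a \<le> t \<and> t \<le> b \<and> t \<notin> U \<longrightarrow>
      (\<forall>u w. t - \<rho> < u \<longrightarrow> u \<le> t \<longrightarrow> t \<le> w \<longrightarrow> w < t + \<rho> \<longrightarrow> \<phi> w - \<phi> u \<le> \<epsilon> * (w - u)))"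
    by blast
  then obtain r where "\<forall>t. 0 < r t \<and> (t \<in> U \<longrightarrow> ball t (r t) \<subseteq> U) \<and> (a \<le> t \<and> t \<le> b \<and> t \<notin> U \<longrightarrow>
      (\<forall>u w. t - r t < u \<longrightarrow> u \<le> t \<longrightarrow> t \<le> w \<longrightarrow> w < t + r t \<longrightarrow> \<phi> w - \<phi> u \<le> \<epsilon> * (w - u)))"
    by (rule choice[THEN exE])
  then show ?thesis
    using that by blast
qed

lemma absolutely_continuous_on_increment_le:
  fixes \<phi> :: "real \<Rightarrow> real"
  assumes "a \<le> b" and ac: "absolutely_continuous_on {a..b} \<phi>"
    and deriv: "AE t in lborel. a < t \<and> t < b \<longrightarrow> upper_deriv_nonpos_at \<phi> t" and "\<epsilon> > 0"
  shows "\<phi> b - \<phi> a \<le> \<epsilon> * (b - a) + \<epsilon>"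
proof -
  obtain \<delta> where "\<delta> > 0" and bad: "\<And>p q. p tagged_division_of {a..b} \<Longrightarrow> q \<subseteq> p \<Longrightarrow>
      (\<Sum>(x,K)\<in>q. measure lborel K) < \<delta> \<Longrightarrow> (\<Sum>(x,K)\<in>q. \<phi> (Sup K) - \<phi> (Inf K)) < \<epsilon>"
    using absolutely_continuous_on_sum_tagged_subdivision[OF ac \<open>\<epsilon> > 0\<close>] by blast
  obtain N where N: "\<And>t. t \<notin> N \<Longrightarrow> a < t \<and> t < b \<longrightarrow> upper_deriv_nonpos_at \<phi> t" "N \<in> null_sets lborel"
    using AE_E3[OF deriv] by auto
  have "negligible N"
    using N(2) by (simp add: negligible_iff_null_sets null_sets_completionI)
  then have "negligible (insert a (insert b N))"
    by simp
  then obtain U where U: "open U" "insert a (insert b N) \<subseteq> U" "U \<in> lmeasurable" "measure lebesgue U < \<delta>"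
    using negligible_open_cover \<open>\<delta> > 0\<close> by blast
  then obtain r where r_pos: "\<And>t. r t > 0" and rU: "\<And>t. t \<in> U \<Longrightarrow> ball t (r t) \<subseteq> U"
    and rgood: "\<And>t u w. a \<le> t \<Longrightarrow> t \<le> b \<Longrightarrow> t \<notin> U \<Longrightarrow> t - r t < u \<Longrightarrow> u \<le> t \<Longrightarrow> t \<le> w \<Longrightarrow>
      w < t + r t \<Longrightarrow> \<phi> w - \<phi> u \<le> \<epsilon> * (w - u)"
    using straddle_gauge_exists[of U a b \<epsilon> \<phi>] N(1) \<open>\<epsilon> > 0\<close> by blast
  obtain p where p: "p tagged_division_of {a..b}" "(\<lambda>t. ball t (r t)) fine p"
    using fine_division_exists_real[OF gauge_ball_dependent] r_pos by blast
  define q where "q = {(x, K) \<in> p. x \<in> U}"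
  have "q \<subseteq> p" "finite p"
    using p(1) by (auto simp: q_def)
  have tags: "a \<le> x" "x \<le> b" if "(x, K) \<in> p" for x K
    using tagged_division_ofD(2,3)[OF p(1) that] by auto
  have "\<phi> b - \<phi> a = (\<Sum>(x,K)\<in>p. \<phi> (Sup K) - \<phi> (Inf K))"
    using additive_tagged_division_1[OF \<open>a \<le> b\<close> p(1), of \<phi>] by simp
  also have "\<dots> = (\<Sum>(x,K)\<in>p - q. \<phi> (Sup K) - \<phi> (Inf K)) + (\<Sum>(x,K)\<in>q. \<phi> (Sup K) - \<phi> (Inf K))"
    by (rule sum.subset_diff[OF \<open>q \<subseteq> p\<close> \<open>finite p\<close>])
  also have "(\<Sum>(x,K)\<in>p - q. \<phi> (Sup K) - \<phi> (Inf K)) \<le> \<epsilon> * (b - a)"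
  proof (rule sum_tagged_division_le_of_straddle[OF p \<open>a \<le> b\<close>])
    fix x K u w assume "(x, K) \<in> p - q" "x - r x < u" "u \<le> x" "x \<le> w" "w < x + r x"
    moreover have "x \<notin> U"
      using \<open>(x, K) \<in> p - q\<close> by (simp add: q_def)
    ultimately show "\<phi> w - \<phi> u \<le> \<epsilon> * (w - u)"
      using rgood tags by blast
  qed (use \<open>\<epsilon> > 0\<close> in auto)
  also have "(\<Sum>(x,K)\<in>q. \<phi> (Sup K) - \<phi> (Inf K)) < \<epsilon>"
  proof (rule bad[OF p(1) \<open>q \<subseteq> p\<close>])
    have "K \<subseteq> U" if "(x, K) \<in> q" for x K
    proof -
      have "(x, K) \<in> p" "x \<in> U"
        using that by (auto simp: q_def)
      then show ?thesis
        using p(2) rU by (force simp: fine_def)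
    qed
    then have "(\<Sum>(x,K)\<in>q. measure lborel K) \<le> measure lebesgue U"
      using sum_content_tagged_subdivision_le_measure[OF p(1) \<open>q \<subseteq> p\<close> U(3)] by blast
    then show "(\<Sum>(x,K)\<in>q. measure lborel K) < \<delta>"
      using U(4) by linarith
  qed
  finally show ?thesis
    by simp
qed

lemma absolutely_continuous_on_nonincreasing:
  fixes \<phi> :: "real \<Rightarrow> real"
  assumes "a \<le> b" "absolutely_continuous_on {a..b} \<phi>"
    and "AE t in lborel. a < t \<and> t < b \<longrightarrow> upper_deriv_nonpos_at \<phi> t"
  shows "\<phi> b \<le> \<phi> a"
proof (rule field_le_epsilon)
  fix e :: real assume "e > 0"
  define \<epsilon> where "\<epsilon> = e / (b - a + 1)"
  have "b - a + 1 > 0"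
    using \<open>a \<le> b\<close> by simp
  then have "\<epsilon> > 0" "\<epsilon> * (b - a + 1) = e"
    using \<open>e > 0\<close> by (simp_all add: \<epsilon>_def)
  then show "\<phi> b \<le> \<phi> a + e"
    using absolutely_continuous_on_increment_le[OF assms \<open>\<epsilon> > 0\<close>] by (simp add: algebra_simps)
qed

section \<open>Convexity and the merit function\<close>

lemma convex_gradient_bounded_imp_lipschitz:
  fixes f :: "'a::real_inner \<Rightarrow> real"
  assumes conv: "\<And>y z. f z \<ge> f y + g y \<bullet> (z - y)"
    and "norm (g x) \<le> C" "norm (g y) \<le> C"
  shows "\<bar>f x - f y\<bar> \<le> C * norm (x - y)"
proof -
  have "f x - f y \<le> g x \<bullet> (x - y)"
    using conv[of x y] by (simp add: inner_diff_right)
  also have "\<dots> \<le> norm (g x) * norm (x - y)"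
    by (rule norm_cauchy_schwarz)
  also have "\<dots> \<le> C * norm (x - y)"
    using assms(2) by (rule mult_right_mono) simp
  finally have "f x - f y \<le> C * norm (x - y)" .
  moreover have "f y - f x \<le> g y \<bullet> (y - x)"
    using conv[of y x] by (simp add: inner_diff_right)
  moreover have "g y \<bullet> (y - x) \<le> norm (g y) * norm (x - y)"
    using norm_cauchy_schwarz[of "g y" "y - x"] by (simp add: norm_minus_commute)
  moreover have "norm (g y) * norm (x - y) \<le> C * norm (x - y)"
    using assms(3) by (rule mult_right_mono) simp
  ultimately show ?thesis
    by linarith
qed

lemma has_real_derivative_comp_gradient:
  fixes F :: "'a::real_inner \<Rightarrow> real"
  assumes "(F has_derivative (\<lambda>h. G \<bullet> h)) (at (x t))" "(x has_vector_derivative v) (at t)"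
  shows "((\<lambda>s. F (x s)) has_real_derivative (G \<bullet> v)) (at t)"
proof -
  have "(x has_derivative (\<lambda>h. h *\<^sub>R v)) (at t)"
    using assms(2) by (simp add: has_vector_derivative_def)
  from has_derivative_compose[OF this assms(1)]
  show ?thesis
    by (rule has_derivative_imp_has_field_derivative) simp
qed

lemma has_real_derivative_power2_norm:
  fixes y :: "real \<Rightarrow> 'a::real_inner"
  assumes "(y has_vector_derivative v) (at t)"
  shows "((\<lambda>s. (norm (y s))\<^sup>2) has_real_derivative (2 * (y t \<bullet> v))) (at t)"
proof -
  have "(y has_derivative (\<lambda>h. h *\<^sub>R v)) (at t)"
    using assms by (simp add: has_vector_derivative_def)
  from has_derivative_inner[OF this this]
  show ?thesis
    unfolding power2_norm_eq_inner
    by (rule has_derivative_imp_has_field_derivative) (simp add: inner_commute algebra_simps)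
qed

text \<open>The bound is affine in the gradient, hence passes to the convex hull.\<close>
lemma strongly_convex_hull_gradient_bound:
  fixes f :: "'i \<Rightarrow> 'a::real_inner \<Rightarrow> real"
  assumes sconv: "\<And>k. f k z \<ge> f k y + g k \<bullet> (z - y) + \<mu> / 2 * (norm (z - y))\<^sup>2"
    and active: "\<And>k. f j y - f j z \<le> f k y - f k z"
    and v: "v \<in> convex hull (range g)"
  shows "f j y - f j z + \<mu> / 2 * (norm (y - z))\<^sup>2 \<le> (y - z) \<bullet> v"
proof -
  let ?c = "f j y - f j z + \<mu> / 2 * (norm (y - z))\<^sup>2"
  have "range g \<subseteq> {w. ?c \<le> (y - z) \<bullet> w}"
  proof clarify
    fix k
    have "(y - z) \<bullet> g k = - (g k \<bullet> (z - y))"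
      by (simp add: inner_commute inner_diff_left inner_diff_right)
    then show "?c \<le> (y - z) \<bullet> g k"
      using sconv[of k] active[of k] by (simp add: norm_minus_commute)
  qed
  then have "convex hull (range g) \<subseteq> {w. ?c \<le> (y - z) \<bullet> w}"
    by (intro hull_minimal convex_halfspace_ge)
  then show ?thesis
    using v by blast
qed

lemma S_fun_less_infinity:
  fixes f :: "'i \<Rightarrow> 'a::real_normed_vector \<Rightarrow> real"
  assumes "bounded {x. f j0 x \<le> \<alpha> j0}"
  shows "S_fun f \<alpha> < \<infinity>"
proof -
  obtain R where R: "\<And>x. f j0 x \<le> \<alpha> j0 \<Longrightarrow> norm x \<le> R"
    using assms unfolding bounded_iff by blast
  have "S_fun f \<alpha> \<le> ereal R"
    unfolding S_fun_def
  proof (rule SUP_least, clarify)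
    fix x assume "x \<in> weak_pareto f" "x \<in> level_set f \<alpha>"
    then have "norm x \<le> R"
      using R by (simp add: level_set_def)
    moreover have "(INF z \<in> {z. (\<lambda>j. f j z) = (\<lambda>j. f j x)}. ereal (norm z)) \<le> ereal (norm x)"
      by (rule INF_lower) simp
    ultimately show "(INF z \<in> {z. (\<lambda>j. f j z) = (\<lambda>j. f j x)}. ereal (norm z)) \<le> ereal R"
      by (simp add: order_trans)
  qed
  then show ?thesis
    by (rule le_less_trans) simp
qed

lemma S_fun_nearly_attained:
  fixes f :: "'i \<Rightarrow> 'a::real_normed_vector \<Rightarrow> real"
  assumes "S_fun f \<alpha> < \<infinity>" "x \<in> weak_pareto f" "x \<in> level_set f \<alpha>" "\<epsilon> > 0"
  obtains z where "\<And>j. f j z = f j x" "norm z < real_of_ereal (S_fun f \<alpha>) + \<epsilon>"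
proof -
  let ?I = "INF z \<in> {z. (\<lambda>j. f j z) = (\<lambda>j. f j x)}. ereal (norm z)"
  have "?I \<le> S_fun f \<alpha>"
    unfolding S_fun_def using assms(2,3) by (intro SUP_upper) auto
  moreover have "0 \<le> ?I"
    by (rule INF_greatest) simp
  ultimately have "S_fun f \<alpha> = ereal (real_of_ereal (S_fun f \<alpha>))"
    using assms(1) by (cases "S_fun f \<alpha>") auto
  with \<open>?I \<le> S_fun f \<alpha>\<close> have "?I \<le> ereal (real_of_ereal (S_fun f \<alpha>))"
    by simp
  then have "?I < ereal (real_of_ereal (S_fun f \<alpha>) + \<epsilon>)"
    by (rule le_less_trans) (simp add: \<open>\<epsilon> > 0\<close>)
  then obtain z where "(\<lambda>j. f j z) = (\<lambda>j. f j x)" "norm z < real_of_ereal (S_fun f \<alpha>) + \<epsilon>"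
    by (auto simp: INF_less_iff)
  then show ?thesis
    using that[of z] by (simp add: fun_eq_iff)
qed

lemma merit_self: "merit f x x = 0"
  by (simp add: merit_def)

lemma u0_nonneg: "0 \<le> u0 f x"
  unfolding u0_def by (rule SUP_upper2[of x]) (simp_all add: merit_self)

lemma merit_le_u0: "ereal (merit f x z) \<le> u0 f x"
  unfolding u0_def by (rule SUP_upper) simp

lemma merit_antimono:
  assumes "\<And>j. f j z' \<le> f j z"
  shows "merit f x z \<le> merit f x z'"
  unfolding merit_def by (rule Min_range_mono) (simp add: assms)

lemma merit_pos_imp_level_set:
  assumes "merit f x z > 0" "x \<in> level_set f \<alpha>"
  shows "z \<in> level_set f \<alpha>"
proof -
  have below: "f j z < f j x" for j
  proof -
    have "merit f x z \<le> f j x - f j z"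
      unfolding merit_def by simp
    then show ?thesis
      using assms(1) by linarith
  qed
  have "f j z \<le> \<alpha> j" for j
    using below[of j] assms(2) by (simp add: level_set_def less_imp_le order.strict_trans2)
  then show ?thesis
    by (simp add: level_set_def)
qed

lemma power2_norm_diff_le: "(norm (x - y))\<^sup>2 \<le> 2 * (norm x)\<^sup>2 + 2 * (norm y)\<^sup>2"
proof -
  have "(norm (x - y))\<^sup>2 \<le> (norm x + norm y)\<^sup>2"
    by (intro power_mono norm_triangle_ineq4) simp
  also have "\<dots> \<le> 2 * (norm x)\<^sup>2 + 2 * (norm y)\<^sup>2"
    using zero_le_power2[of "norm x - norm y"] by (simp add: power2_eq_square algebra_simps)
  finally show ?thesis .
qed

section \<open>The accelerated flow\<close>

locale multiobjective_flow =
  fixes f :: "'i::finite \<Rightarrow> 'a::euclidean_space \<Rightarrow> real"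
    and g :: "'i \<Rightarrow> 'a \<Rightarrow> 'a"
    and \<mu>s Ls :: "'i \<Rightarrow> real"
    and \<gamma>0 :: real and x0 x1 :: 'a
    and X Z :: "real \<Rightarrow> 'a"
  assumes grad: "\<And>j x. (f j has_derivative (\<lambda>h. g j x \<bullet> h)) (at x)"
    and lip: "\<And>j x y. norm (g j x - g j y) \<le> Ls j * norm (x - y)"
    and sconv: "\<And>j y z. f j z \<ge> f j y + g j y \<bullet> (z - y) + \<mu>s j / 2 * (norm (z - y))\<^sup>2"
    and mu_nonneg: "\<And>j. 0 \<le> \<mu>s j"
    and mu_le_L: "\<And>j. \<mu>s j \<le> Ls j"
    and gamma0_pos: "\<gamma>0 > 0"
    and X_ac: "loc_abs_cont_nonneg X"
    and Z_ac: "loc_abs_cont_nonneg Z"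
    and X0: "X 0 = x0"
    and Z0: "Z 0 = x0 + x1"
    and ode: "AE t in lborel. t > 0 \<longrightarrow>
        (X has_vector_derivative (Z t - X t)) (at t) \<and>
        (\<exists>Z' v. (Z has_vector_derivative Z') (at t) \<and>
           v \<in> convex hull (range (\<lambda>j. g j (X t))) \<and>
           (\<forall>w \<in> convex hull (range (\<lambda>j. g j (X t))). (X t - Z t) \<bullet> v \<le> (X t - Z t) \<bullet> w) \<and>
           (Min (range \<mu>s) + (\<gamma>0 - Min (range \<mu>s)) * exp (- t)) *\<^sub>R Z'
              = Min (range \<mu>s) *\<^sub>R (X t - Z t) - v)"
begin

definition \<mu> :: real where
  "\<mu> = Min (range \<mu>s)"

definition \<gamma> :: "real \<Rightarrow> real" where
  "\<gamma> t = \<mu> + (\<gamma>0 - \<mu>) * exp (- t)"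

abbreviation \<alpha> :: "'i \<Rightarrow> real" where
  "\<alpha> \<equiv> \<lambda>j. f j x0 + \<gamma>0 / 2 * (norm x1)\<^sup>2"

definition flow_at :: "real \<Rightarrow> bool" where
  "flow_at t \<longleftrightarrow> (X has_vector_derivative (Z t - X t)) (at t) \<and>
     (\<exists>Z' v. (Z has_vector_derivative Z') (at t) \<and>
        v \<in> convex hull (range (\<lambda>j. g j (X t))) \<and>
        (\<forall>w \<in> convex hull (range (\<lambda>j. g j (X t))). (X t - Z t) \<bullet> v \<le> (X t - Z t) \<bullet> w) \<and>
        \<gamma> t *\<^sub>R Z' = \<mu> *\<^sub>R (X t - Z t) - v)"

definition energy :: "'i \<Rightarrow> real \<Rightarrow> real" where
  "energy j t = f j (X t) + \<gamma> t / 2 * (norm (Z t - X t))\<^sup>2"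

definition lyapunov :: "'a \<Rightarrow> 'i \<Rightarrow> real \<Rightarrow> real" where
  "lyapunov z j t = exp t * (f j (X t) - f j z + \<gamma> t / 2 * (norm (Z t - z))\<^sup>2)"

lemma flow_at_AE: "AE t in lborel. t > 0 \<longrightarrow> flow_at t"
  using ode unfolding flow_at_def \<gamma>_def \<mu>_def .

lemma \<mu>_le: "\<mu> \<le> \<mu>s j"
  unfolding \<mu>_def by simp

lemma \<mu>_nonneg: "\<mu> \<ge> 0"
proof -
  obtain j where "\<mu> = \<mu>s j"
    unfolding \<mu>_def by (rule Min_range_attained)
  then show ?thesis
    using mu_nonneg by simp
qed

lemma \<gamma>_nonneg: "t \<ge> 0 \<Longrightarrow> \<gamma> t \<ge> 0"
proof -
  assume "t \<ge> 0"
  then have "exp (- t) \<le> 1"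
    by simp
  moreover have "\<gamma> t = \<mu> * (1 - exp (- t)) + \<gamma>0 * exp (- t)"
    by (simp add: \<gamma>_def algebra_simps)
  ultimately show ?thesis
    using \<mu>_nonneg gamma0_pos by simp
qed

lemma \<gamma>_0: "\<gamma> 0 = \<gamma>0"
  by (simp add: \<gamma>_def)

lemma \<gamma>_has_real_derivative: "(\<gamma> has_real_derivative (\<mu> - \<gamma> t)) (at t)"
proof -
  have "((\<lambda>s. \<mu> + (\<gamma>0 - \<mu>) * exp (- s)) has_real_derivative (\<gamma>0 - \<mu>) * (exp (- t) * - 1)) (at t)"
    by (auto intro!: derivative_eq_intros)
  then show ?thesis
    unfolding \<gamma>_def[abs_def] by (simp add: algebra_simps)
qed

lemma flow_atE:
  assumes "flow_at t"
  obtains Z' v where "(X has_vector_derivative (Z t - X t)) (at t)" "(Z has_vector_derivative Z') (at t)"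
    "v \<in> convex hull (range (\<lambda>j. g j (X t)))"
    "\<And>j. (Z t - X t) \<bullet> g j (X t) \<le> (Z t - X t) \<bullet> v"
    "\<gamma> t *\<^sub>R Z' = - \<mu> *\<^sub>R (Z t - X t) - v"
proof -
  obtain Z' v where *: "(X has_vector_derivative (Z t - X t)) (at t)" "(Z has_vector_derivative Z') (at t)"
    "v \<in> convex hull (range (\<lambda>j. g j (X t)))"
    "\<forall>w \<in> convex hull (range (\<lambda>j. g j (X t))). (X t - Z t) \<bullet> v \<le> (X t - Z t) \<bullet> w"
    "\<gamma> t *\<^sub>R Z' = \<mu> *\<^sub>R (X t - Z t) - v"
    using assms unfolding flow_at_def by blast
  have "(Z t - X t) \<bullet> g j (X t) \<le> (Z t - X t) \<bullet> v" for j
  proof -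
    have "g j (X t) \<in> convex hull (range (\<lambda>j. g j (X t)))"
      by (rule hull_inc) simp
    then have "(X t - Z t) \<bullet> v \<le> (X t - Z t) \<bullet> g j (X t)"
      using *(4) by blast
    then show ?thesis
      unfolding inner_diff_left by linarith
  qed
  moreover have "\<gamma> t *\<^sub>R Z' = - \<mu> *\<^sub>R (Z t - X t) - v"
    using *(5) by (simp add: algebra_simps)
  ultimately show ?thesis
    using that * by blast
qed

lemma energy_has_real_derivative_nonpos:
  assumes "flow_at t" "t \<ge> 0"
  obtains D where "(energy j has_real_derivative D) (at t)" "D \<le> 0"
proof -
  obtain Z' v where X': "(X has_vector_derivative (Z t - X t)) (at t)" and Z': "(Z has_vector_derivative Z') (at t)"
    and argmin: "\<And>j. (Z t - X t) \<bullet> g j (X t) \<le> (Z t - X t) \<bullet> v"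
    and eq: "\<gamma> t *\<^sub>R Z' = - \<mu> *\<^sub>R (Z t - X t) - v"
    using flow_atE[OF assms(1)] by metis
  define d where "d = Z t - X t"
  have "((\<lambda>s. (norm (Z s - X s))\<^sup>2) has_real_derivative 2 * (d \<bullet> (Z' - d))) (at t)"
    using has_real_derivative_power2_norm[OF has_vector_derivative_diff[OF Z' X']] by (simp add: d_def)
  then have deriv: "(energy j has_real_derivative
      g j (X t) \<bullet> d + ((\<mu> - \<gamma> t) / 2 * (d \<bullet> d) + 2 * (d \<bullet> (Z' - d)) * (\<gamma> t / 2))) (at t)"
    unfolding energy_def[abs_def]
    using has_real_derivative_comp_gradient[OF grad X'] \<gamma>_has_real_derivative
    by (auto intro!: derivative_eq_intros simp: d_def power2_norm_eq_inner)
  have "\<gamma> t * (d \<bullet> Z') = - \<mu> * (d \<bullet> d) - d \<bullet> v"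
    using arg_cong[OF eq, of "inner d"] by (simp add: d_def inner_diff_right)
  moreover have "2 * (d \<bullet> (Z' - d)) * (\<gamma> t / 2) = \<gamma> t * (d \<bullet> Z') - \<gamma> t * (d \<bullet> d)"
    by (simp add: inner_diff_right algebra_simps)
  moreover have "(\<mu> - \<gamma> t) / 2 * (d \<bullet> d) = \<mu> * (d \<bullet> d) / 2 - \<gamma> t * (d \<bullet> d) / 2"
    by (simp add: algebra_simps diff_divide_distrib)
  moreover have "\<mu> * (d \<bullet> d) \<ge> 0" "\<gamma> t * (d \<bullet> d) \<ge> 0"
    using \<mu>_nonneg \<gamma>_nonneg[OF assms(2)] by simp_all
  moreover have "g j (X t) \<bullet> d \<le> d \<bullet> v"
    using argmin[of j] by (simp add: d_def inner_commute)
  ultimately have "g j (X t) \<bullet> d + ((\<mu> - \<gamma> t) / 2 * (d \<bullet> d) + 2 * (d \<bullet> (Z' - d)) * (\<gamma> t / 2)) \<le> 0"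
    by linarith
  with deriv show ?thesis
    by (rule that)
qed

lemma lyapunov_has_real_derivative:
  assumes "flow_at t" "t \<ge> 0"
  obtains D where "(lyapunov z j has_real_derivative D) (at t)"
    "(\<And>k. f j (X t) - f j z \<le> f k (X t) - f k z) \<Longrightarrow> D \<le> 0"
proof -
  obtain Z' v where X': "(X has_vector_derivative (Z t - X t)) (at t)" and Z': "(Z has_vector_derivative Z') (at t)"
    and v: "v \<in> convex hull (range (\<lambda>j. g j (X t)))"
    and argmin: "\<And>j. (Z t - X t) \<bullet> g j (X t) \<le> (Z t - X t) \<bullet> v"
    and eq: "\<gamma> t *\<^sub>R Z' = - \<mu> *\<^sub>R (Z t - X t) - v"
    using flow_atE[OF assms(1)] by metis
  define d where "d = Z t - X t"
  define a where "a = X t - z"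
  define w where "w = Z t - z"
  define L where "L = f j (X t) - f j z + \<gamma> t / 2 * (norm w)\<^sup>2"
  define E where "E = g j (X t) \<bullet> d + ((\<mu> - \<gamma> t) / 2 * (norm w)\<^sup>2 + 2 * (w \<bullet> Z') * (\<gamma> t / 2))"
  have w: "w = a + d"
    by (simp add: w_def a_def d_def)
  have "((\<lambda>s. (norm (Z s - z))\<^sup>2) has_real_derivative 2 * (w \<bullet> Z')) (at t)"
    using has_real_derivative_power2_norm[OF has_vector_derivative_diff[OF Z' has_vector_derivative_const[of z]]]
    by (simp add: w_def)
  from DERIV_add[OF DERIV_diff[OF has_real_derivative_comp_gradient[OF grad[of j] X'] DERIV_const[of "f j z"]]
      DERIV_mult[OF DERIV_cdivide[OF \<gamma>_has_real_derivative, of 2] this]]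
  have "((\<lambda>s. f j (X s) - f j z + \<gamma> s / 2 * (norm (Z s - z))\<^sup>2) has_real_derivative E) (at t)"
    by (simp add: E_def d_def w_def)
  from DERIV_mult[OF DERIV_exp this]
  have deriv: "(lyapunov z j has_real_derivative exp t * (L + E)) (at t)"
    unfolding lyapunov_def[abs_def] by (simp add: L_def w_def algebra_simps)
  have "L + E \<le> 0" if active: "\<And>k. f j (X t) - f j z \<le> f k (X t) - f k z"
  proof -
    have sc: "f k z \<ge> f k (X t) + g k (X t) \<bullet> (z - X t) + \<mu> / 2 * (norm (z - X t))\<^sup>2" for k
      using sconv[of k "X t" z] \<mu>_le[of k] mult_right_mono[of \<mu> "\<mu>s k" "(norm (z - X t))\<^sup>2 / 2"] by simp
    have "f j (X t) - f j z + \<mu> / 2 * (a \<bullet> a) \<le> a \<bullet> v"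
      using strongly_convex_hull_gradient_bound[where g="\<lambda>k. g k (X t)", OF sc active v]
      by (simp add: a_def power2_norm_eq_inner)
    moreover have "\<gamma> t * (w \<bullet> Z') = - \<mu> * (w \<bullet> d) - w \<bullet> v"
      using arg_cong[OF eq, of "inner w"] by (simp add: d_def inner_diff_right)
    moreover have "\<mu> / 2 * (w \<bullet> w) - \<mu> * (w \<bullet> d) = \<mu> / 2 * (a \<bullet> a) - \<mu> / 2 * (d \<bullet> d)"
      by (simp add: w inner_add_left inner_add_right inner_commute algebra_simps)
    moreover have "w \<bullet> v = a \<bullet> v + d \<bullet> v"
      by (simp add: w inner_add_left)
    moreover have "g j (X t) \<bullet> d \<le> d \<bullet> v"
      using argmin[of j] by (simp add: d_def inner_commute)
    moreover have "\<mu> / 2 * (d \<bullet> d) \<ge> 0"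
      using \<mu>_nonneg by simp
    moreover have "L + E = f j (X t) - f j z + g j (X t) \<bullet> d + \<mu> / 2 * (w \<bullet> w) + \<gamma> t * (w \<bullet> Z')"
      by (simp add: L_def E_def power2_norm_eq_inner algebra_simps diff_divide_distrib)
    ultimately show ?thesis
      by linarith
  qed
  with deriv show ?thesis
    using that by (simp add: mult_nonneg_nonpos)
qed

lemma gradient_inequality: "f j z \<ge> f j y + g j y \<bullet> (z - y)"
proof -
  have "\<mu>s j / 2 * (norm (z - y))\<^sup>2 \<ge> 0"
    using mu_nonneg[of j] by simp
  then show ?thesis
    using sconv[of j y z] by linarith
qed

lemma absolutely_continuous_X: "T \<ge> 0 \<Longrightarrow> absolutely_continuous_on {0..T} X"
  using X_ac unfolding loc_abs_cont_nonneg_def by blast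

lemma absolutely_continuous_Z: "T \<ge> 0 \<Longrightarrow> absolutely_continuous_on {0..T} Z"
  using Z_ac unfolding loc_abs_cont_nonneg_def by blast

lemma absolutely_continuous_f_X:
  assumes "T \<ge> 0"
  shows "absolutely_continuous_on {0..T} (\<lambda>s. f j (X s))"
proof -
  obtain B where B: "B \<ge> 0" "\<And>s. s \<in> {0..T} \<Longrightarrow> norm (X s) \<le> B"
    using absolutely_continuous_on_bounded[OF absolutely_continuous_X[OF assms]] by blast
  define C where "C = norm (g j 0) + Ls j * B"
  have "Ls j \<ge> 0"
    using mu_nonneg[of j] mu_le_L[of j] by linarith
  have g_bound: "norm (g j y) \<le> C" if "y \<in> cball 0 B" for y
  proof -
    have "norm (g j y) \<le> norm (g j 0) + norm (g j y - g j 0)"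
      by (rule norm_triangle_sub)
    also have "norm (g j y - g j 0) \<le> Ls j * B"
      using lip[of j y 0] that \<open>Ls j \<ge> 0\<close> by (simp add: order_trans[OF _ mult_left_mono])
    finally show ?thesis
      by (simp add: C_def)
  qed
  show ?thesis
  proof (rule absolutely_continuous_on_compose_lipschitz[OF absolutely_continuous_X[OF assms], where D="cball 0 B" and K=C])
    fix y y' :: 'a assume "y \<in> cball 0 B" "y' \<in> cball 0 B"
    then show "norm (f j y - f j y') \<le> C * norm (y - y')"
      using convex_gradient_bounded_imp_lipschitz[OF gradient_inequality g_bound g_bound] by simp
  qed (use B \<open>Ls j \<ge> 0\<close> in \<open>auto simp: C_def\<close>)
qed

lemma absolutely_continuous_half_\<gamma>: "absolutely_continuous_on {0..T} (\<lambda>s. \<gamma> s / 2)"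
proof (rule absolutely_continuous_on_derivative_bounded)
  fix s :: real assume "s \<in> {0..T}"
  show "((\<lambda>s. \<gamma> s / 2) has_real_derivative (\<mu> - \<gamma> s) / 2) (at s)"
    by (rule DERIV_cdivide[OF \<gamma>_has_real_derivative])
  have "\<bar>\<mu> - \<gamma> s\<bar> = \<bar>\<gamma>0 - \<mu>\<bar> * exp (- s)"
    by (simp add: \<gamma>_def abs_mult)
  also have "\<dots> \<le> \<bar>\<gamma>0 - \<mu>\<bar>"
    using \<open>s \<in> {0..T}\<close> by (intro mult_left_le) auto
  finally show "\<bar>(\<mu> - \<gamma> s) / 2\<bar> \<le> \<bar>\<gamma>0 - \<mu>\<bar> / 2"
    by simp
qed

lemma absolutely_continuous_energy: "T \<ge> 0 \<Longrightarrow> absolutely_continuous_on {0..T} (energy j)"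
  unfolding energy_def
  by (intro absolutely_continuous_on_add absolutely_continuous_on_mult absolutely_continuous_f_X
      absolutely_continuous_half_\<gamma> absolutely_continuous_on_power2_norm absolutely_continuous_on_diff
      absolutely_continuous_X absolutely_continuous_Z)

lemma absolutely_continuous_lyapunov: "T \<ge> 0 \<Longrightarrow> absolutely_continuous_on {0..T} (lyapunov z j)"
  unfolding lyapunov_def
  by (intro absolutely_continuous_on_add absolutely_continuous_on_mult absolutely_continuous_f_X
      absolutely_continuous_half_\<gamma> absolutely_continuous_on_power2_norm absolutely_continuous_on_diff
      absolutely_continuous_X absolutely_continuous_Z absolutely_continuous_on_exp absolutely_continuous_on_const)

lemma energy_nonincreasing:
  assumes "T \<ge> 0"
  shows "energy j T \<le> energy j 0"
proof (rule absolutely_continuous_on_nonincreasing[OF assms absolutely_continuous_energy[OF assms]])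
  show "AE t in lborel. 0 < t \<and> t < T \<longrightarrow> upper_deriv_nonpos_at (energy j) t"
    using flow_at_AE
  proof eventually_elim
    case (elim t)
    show ?case
    proof
      assume "0 < t \<and> t < T"
      with elim obtain D where "(energy j has_real_derivative D) (at t)" "D \<le> 0"
        using energy_has_real_derivative_nonpos[of t j] by auto
      then show "upper_deriv_nonpos_at (energy j) t"
        by (rule upper_deriv_nonpos_at_deriv)
    qed
  qed
qed

lemma Min_lyapunov_nonincreasing:
  assumes "T \<ge> 0"
  shows "Min (range (\<lambda>j. lyapunov z j T)) \<le> Min (range (\<lambda>j. lyapunov z j 0))"
proof (rule absolutely_continuous_on_nonincreasing[OF assms absolutely_continuous_on_Min])
  show "absolutely_continuous_on {0..T} (lyapunov z j)" for j
    by (rule absolutely_continuous_lyapunov[OF assms])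
  show "AE t in lborel. 0 < t \<and> t < T \<longrightarrow> upper_deriv_nonpos_at (\<lambda>s. Min (range (\<lambda>j. lyapunov z j s))) t"
    using flow_at_AE
  proof eventually_elim
    case (elim t)
    show ?case
    proof
      assume "0 < t \<and> t < T"
      with elim have "\<forall>j. \<exists>D. (lyapunov z j has_real_derivative D) (at t) \<and>
          ((\<forall>k. f j (X t) - f j z \<le> f k (X t) - f k z) \<longrightarrow> D \<le> 0)"
        using lyapunov_has_real_derivative[of t z] by (metis less_imp_le)
      then obtain D where D: "\<forall>j. (lyapunov z j has_real_derivative D j) (at t) \<and>
          ((\<forall>k. f j (X t) - f j z \<le> f k (X t) - f k z) \<longrightarrow> D j \<le> 0)"
        by (rule choice[THEN exE])
      have "D j \<le> 0" if "lyapunov z j t = Min (range (\<lambda>k. lyapunov z k t))" for j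
      proof -
        have "lyapunov z j t \<le> lyapunov z k t" for k
          using that by simp
        then have "f j (X t) - f j z \<le> f k (X t) - f k z" for k
          by (simp add: lyapunov_def)
        then show ?thesis
          using D by blast
      qed
      then show "upper_deriv_nonpos_at (\<lambda>s. Min (range (\<lambda>j. lyapunov z j s))) t"
        using D by (intro upper_deriv_nonpos_at_Min) auto
    qed
  qed
qed

lemma trajectory_in_level_set:
  assumes "t \<ge> 0"
  shows "X t \<in> level_set f \<alpha>"
  unfolding level_set_def
proof (intro CollectI allI)
  fix j
  have "f j (X t) \<le> energy j t"
    using \<gamma>_nonneg[OF assms] by (simp add: energy_def)
  also have "\<dots> \<le> energy j 0"
    by (rule energy_nonincreasing[OF assms])
  also have "\<dots> = f j x0 + \<gamma>0 / 2 * (norm x1)\<^sup>2"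
    by (simp add: energy_def X0 Z0 \<gamma>_0)
  finally show "f j (X t) \<le> f j x0 + \<gamma>0 / 2 * (norm x1)\<^sup>2" .
qed

lemma merit_decay:
  assumes "T \<ge> 0"
  shows "merit f (X T) z \<le> exp (- T) * (merit f x0 z + \<gamma>0 / 2 * (norm (x0 + x1 - z))\<^sup>2)"
proof -
  have Min_lyapunov: "Min (range (\<lambda>j. lyapunov z j s)) = exp s * (merit f (X s) z + \<gamma> s / 2 * (norm (Z s - z))\<^sup>2)" for s
    unfolding lyapunov_def merit_def by (rule Min_range_affine) simp
  have "exp T * merit f (X T) z \<le> exp T * (merit f (X T) z + \<gamma> T / 2 * (norm (Z T - z))\<^sup>2)"
    using \<gamma>_nonneg[OF assms] by simp
  also have "\<dots> \<le> merit f x0 z + \<gamma>0 / 2 * (norm (x0 + x1 - z))\<^sup>2"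
    using Min_lyapunov_nonincreasing[OF assms, of z] by (simp add: Min_lyapunov X0 Z0 \<gamma>_0)
  finally show ?thesis
    by (simp add: exp_minus field_simps)
qed

lemma merit_trajectory_bound_level_set:
  assumes S: "S_fun f \<alpha> < \<infinity>" and "t \<ge> 0" and U: "\<And>z. merit f x0 z \<le> U"
    and z: "z \<in> weak_pareto f" "z \<in> level_set f \<alpha>"
  shows "merit f (X t) z \<le> exp (- t) * (U + \<gamma>0 * (norm (x0 + x1))\<^sup>2 + \<gamma>0 * (real_of_ereal (S_fun f \<alpha>))\<^sup>2)"
proof -
  define h where "h \<epsilon> = exp (- t) * (U + \<gamma>0 * (norm (x0 + x1))\<^sup>2 + \<gamma>0 * (real_of_ereal (S_fun f \<alpha>) + \<epsilon>)\<^sup>2)"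
    for \<epsilon>
  have near: "merit f (X t) z \<le> h \<epsilon>" if \<epsilon>: "\<epsilon> > 0" for \<epsilon>
  proof -
    obtain z' where z': "\<And>j. f j z' = f j z" "norm z' < real_of_ereal (S_fun f \<alpha>) + \<epsilon>"
      using S_fun_nearly_attained[OF S z \<epsilon>] by blast
    have "merit f (X t) z = merit f (X t) z'"
      using z'(1) by (simp add: merit_def)
    also have "\<dots> \<le> exp (- t) * (merit f x0 z' + \<gamma>0 / 2 * (norm (x0 + x1 - z'))\<^sup>2)"
      by (rule merit_decay[OF \<open>t \<ge> 0\<close>])
    also have "\<dots> \<le> exp (- t) * (U + \<gamma>0 / 2 * (2 * (norm (x0 + x1))\<^sup>2 + 2 * (norm z')\<^sup>2))"
      using U[of z'] power2_norm_diff_le[of "x0 + x1" z'] gamma0_pos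
      by (intro mult_left_mono add_mono) auto
    also have "\<dots> \<le> h \<epsilon>"
    proof -
      have "(norm z')\<^sup>2 \<le> (real_of_ereal (S_fun f \<alpha>) + \<epsilon>)\<^sup>2"
        using z'(2) by (intro power_mono) auto
      then have "\<gamma>0 * (norm z')\<^sup>2 \<le> \<gamma>0 * (real_of_ereal (S_fun f \<alpha>) + \<epsilon>)\<^sup>2"
        using gamma0_pos by (intro mult_left_mono) auto
      then show ?thesis
        unfolding h_def by (intro mult_left_mono) (simp_all add: algebra_simps)
    qed
    finally show ?thesis .
  qed
  have "(h \<longlongrightarrow> h 0) (at_right 0)"
    unfolding h_def by (intro tendsto_intros)
  moreover have "\<forall>\<^sub>F \<epsilon> in at_right 0. merit f (X t) z \<le> h \<epsilon>"
    using eventually_at_right_less by (rule eventually_mono) (rule near)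
  ultimately have "merit f (X t) z \<le> h 0"
    by (rule tendsto_lowerbound) simp
  then show ?thesis
    by (simp add: h_def)
qed

lemma merit_trajectory_bound:
  assumes pareto: "\<And>x. \<exists>xs \<in> weak_pareto f. \<forall>j. f j xs \<le> f j x"
    and S: "S_fun f \<alpha> < \<infinity>" and "t \<ge> 0" and U: "\<And>z. merit f x0 z \<le> U"
  shows "merit f (X t) z \<le> exp (- t) * (U + \<gamma>0 * (norm (x0 + x1))\<^sup>2 + \<gamma>0 * (real_of_ereal (S_fun f \<alpha>))\<^sup>2)"
    (is "_ \<le> ?bound")
proof (cases "merit f (X t) z \<le> 0")
  case True
  have "U \<ge> 0"
    using U[of x0] by (simp add: merit_self)
  then have "0 \<le> ?bound"
    using gamma0_pos by simp
  with True show ?thesis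
    by linarith
next
  case False
  obtain z' where z': "z' \<in> weak_pareto f" "\<And>j. f j z' \<le> f j z"
    using pareto[of z] by blast
  have dominated: "merit f (X t) z \<le> merit f (X t) z'"
    by (rule merit_antimono) (use z' in auto)
  with False have "merit f (X t) z' > 0"
    by linarith
  then have "z' \<in> level_set f \<alpha>"
    using trajectory_in_level_set[OF \<open>t \<ge> 0\<close>] by (rule merit_pos_imp_level_set)
  then have "merit f (X t) z' \<le> ?bound"
    using merit_trajectory_bound_level_set[OF S \<open>t \<ge> 0\<close> U z'(1)] by blast
  with dominated show ?thesis
    by linarith
qed

lemma u0_trajectory_bound:
  assumes pareto: "\<And>x. \<exists>xs \<in> weak_pareto f. \<forall>j. f j xs \<le> f j x"
    and S: "S_fun f \<alpha> < \<infinity>" and "t \<ge> 0"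
  shows "u0 f (X t) \<le> ereal (exp (- t)) *
    (u0 f x0 + ereal (\<gamma>0 * (norm (x0 + x1))\<^sup>2 + \<gamma>0 * (real_of_ereal (S_fun f \<alpha>))\<^sup>2))"
proof (cases "u0 f x0")
  case (real U)
  have "merit f x0 z \<le> U" for z
    using merit_le_u0[of f x0 z] real by simp
  then have "u0 f (X t) \<le> ereal (exp (- t) * (U + \<gamma>0 * (norm (x0 + x1))\<^sup>2 + \<gamma>0 * (real_of_ereal (S_fun f \<alpha>))\<^sup>2))"
    unfolding u0_def using merit_trajectory_bound[OF pareto S \<open>t \<ge> 0\<close>] by (intro SUP_least) simp
  then show ?thesis
    by (simp add: real add.assoc)
next
  case PInf
  then show ?thesis
    by simp
next
  case MInf
  then show ?thesis
    using u0_nonneg[of f x0] by simp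
qed

end

theorem mainTheorem8:
  fixes f :: "'i::finite \<Rightarrow> 'a::euclidean_space \<Rightarrow> real"
    and g :: "'i \<Rightarrow> 'a \<Rightarrow> 'a"
    and \<mu>s Ls :: "'i \<Rightarrow> real"
    and \<gamma>0 :: real and x0 x1 :: 'a
    and X Z :: "real \<Rightarrow> 'a"
  assumes grad: "\<And>j x. (f j has_derivative (\<lambda>h. g j x \<bullet> h)) (at x)"
    and lip: "\<And>j x y. norm (g j x - g j y) \<le> Ls j * norm (x - y)"
    and sconv: "\<And>j y z. f j z \<ge> f j y + g j y \<bullet> (z - y) + \<mu>s j / 2 * (norm (z - y))\<^sup>2"
    and mu_nonneg: "\<And>j. 0 \<le> \<mu>s j"
    and mu_le_L: "\<And>j. \<mu>s j \<le> Ls j"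
    and A2: "\<exists>j0. \<forall>c. bounded {x. f j0 x \<le> c}"
    and A3: "\<And>x. \<exists>xs \<in> weak_pareto f. \<forall>j. f j xs \<le> f j x"
    and gamma0_pos: "\<gamma>0 > 0"
    and X_ac: "loc_abs_cont_nonneg X"
    and Z_ac: "loc_abs_cont_nonneg Z"
    and X0: "X 0 = x0"
    and Z0: "Z 0 = x0 + x1"
    and ode: "AE t in lborel. t > 0 \<longrightarrow>
        (X has_vector_derivative (Z t - X t)) (at t) \<and>
        (\<exists>Z' v. (Z has_vector_derivative Z') (at t) \<and>
           v \<in> convex hull (range (\<lambda>j. g j (X t))) \<and>
           (\<forall>w \<in> convex hull (range (\<lambda>j. g j (X t))). (X t - Z t) \<bullet> v \<le> (X t - Z t) \<bullet> w) \<and>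
           (Min (range \<mu>s) + (\<gamma>0 - Min (range \<mu>s)) * exp (- t)) *\<^sub>R Z'
              = Min (range \<mu>s) *\<^sub>R (X t - Z t) - v)"
  shows "S_fun f (\<lambda>j. f j x0 + \<gamma>0 / 2 * (norm x1)\<^sup>2) < \<infinity> \<and>
    (\<forall>t>0. u0 f (X t) \<le> ereal (exp (- t)) *
       (u0 f x0 + ereal (\<gamma>0 * (norm (x0 + x1))\<^sup>2
          + \<gamma>0 * (real_of_ereal (S_fun f (\<lambda>j. f j x0 + \<gamma>0 / 2 * (norm x1)\<^sup>2)))\<^sup>2)))"
proof -
  interpret multiobjective_flow f g \<mu>s Ls \<gamma>0 x0 x1 X Z
    by unfold_locales (fact grad lip sconv mu_nonneg mu_le_L gamma0_pos X_ac Z_ac X0 Z0 ode)+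
  obtain j0 where "bounded {x. f j0 x \<le> \<alpha> j0}"
    using A2 by blast
  then have S: "S_fun f \<alpha> < \<infinity>"
    by (rule S_fun_less_infinity)
  show ?thesis
  proof (intro conjI allI impI S)
    fix t :: real assume "t > 0"
    then show "u0 f (X t) \<le> ereal (exp (- t)) *
       (u0 f x0 + ereal (\<gamma>0 * (norm (x0 + x1))\<^sup>2 + \<gamma>0 * (real_of_ereal (S_fun f \<alpha>))\<^sup>2))"
      by (intro u0_trajectory_bound[OF A3 S]) simp
  qed
qed

end
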